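(* Every $f\in\operatorname{NDPF}^{(1)}_N$ is entirely determined by its set of fibers, its set of images, and the single value $f(i)$ for one $i\in\mathbb{Z}$.
   Context: $\operatorname{NDPF}^{(1)}_N$ is the set of functions $f:\mathbb{Z}\to\mathbb{Z}$ that are regressive ($f(i)\le i$), order preserving ($i\le j\Rightarrow f(i)\le f(j)$) and skew periodic ($f(i+N)=f(i)+N$), excluding the shift functions $i\mapsto i-t$ with $t\ne0$. The fibers of $f$ are the nonempty sets $f^{-1}(a)$, $a\in\mathbb{Z}$. *)

theory Defs
  imports Main
begin

definition NDPF1 :: "int \<Rightarrow> (int \<Rightarrow> int) set" where
  "NDPF1 N = {f. (\<forall>i. f i \<le> i) \<and> (\<forall>i j. i \<le> j \<longrightarrow> f i \<le> f j)
              \<and> (\<forall>i. f (i + N) = f i + N)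
              \<and> \<not> (\<exists>t. t \<noteq> 0 \<and> f = (\<lambda>i. i - t))}"

definition fibers :: "(int \<Rightarrow> int) \<Rightarrow> int set set" where
  "fibers f = {f -` {a} | a. f -` {a} \<noteq> {}}"

end

theory Submission
  imports Defs
begin

text \<open>If two monotone maps agree at j, then j + 1 lies in the
  common fibre of j for both or for neither; in the latter case the value g (j + 1) > g j is
  attained by f somewhere to the right of j, hence f (j + 1) \<le> g (j + 1). Symmetry in f and g
  and the mirror argument towards j - 1 propagate agreement from one point to all of \<int>.\<close>

lemma fibers_eq_imp_same_fiber_iff:
  assumes "fibers f = fibers g"
  shows "f k = f j \<longleftrightarrow> g k = g j"
proof -
  have "f -` {f j} \<in> fibers f"
    unfolding fibers_def by auto
  then have "f -` {f j} \<in> fibers g"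
    using assms by simp
  then obtain b where b: "f -` {f j} = g -` {b}"
    unfolding fibers_def by auto
  then have "b = g j"
    by (metis singleton_iff vimageE vimageI2)
  with b show ?thesis
    by blast
qed

lemma mono_succ_le:
  fixes f g :: "int \<Rightarrow> int"
  assumes "mono f" "mono g" "fibers f = fibers g" "range g \<subseteq> range f" "f j = g j"
  shows "f (j + 1) \<le> g (j + 1)"
proof (cases "g (j + 1) = g j")
  case True
  then show ?thesis
    using fibers_eq_imp_same_fiber_iff[OF assms(3)] assms(5) by (metis order_refl)
next
  case False
  then have "f j < g (j + 1)"
    using assms(2,5) by (simp add: monoD order_less_le)
  moreover obtain m where m: "g (j + 1) = f m"
    using assms(4) by blast
  ultimately have "j < m"
    using assms(1) by (metis monoD not_less)
  then have "j + 1 \<le> m"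
    by simp
  then show ?thesis
    using assms(1) m by (simp add: monoD)
qed

lemma mono_pred_ge:
  fixes f g :: "int \<Rightarrow> int"
  assumes "mono f" "mono g" "fibers f = fibers g" "range g \<subseteq> range f" "f j = g j"
  shows "g (j - 1) \<le> f (j - 1)"
proof (cases "g (j - 1) = g j")
  case True
  then show ?thesis
    using fibers_eq_imp_same_fiber_iff[OF assms(3)] assms(5) by (metis order_refl)
next
  case False
  then have "g (j - 1) < f j"
    using assms(2,5) by (simp add: monoD order_less_le)
  moreover obtain m where m: "g (j - 1) = f m"
    using assms(4) by blast
  ultimately have "m < j"
    using assms(1) by (metis monoD not_less)
  then have "m \<le> j - 1"
    by simp
  then show ?thesis
    using assms(1) m by (simp add: monoD)
qed

lemma mono_eq_if_fibers_range_eq: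
  fixes f g :: "int \<Rightarrow> int"
  assumes mono: "mono f" "mono g"
    and fib: "fibers f = fibers g" and rng: "range f = range g"
    and "f i = g i"
  shows "f = g"
proof
  fix x
  note succ = mono_succ_le[OF mono fib] mono_succ_le[OF mono(2,1) fib[symmetric]]
  note pred = mono_pred_ge[OF mono fib] mono_pred_ge[OF mono(2,1) fib[symmetric]]
  show "f x = g x"
  proof (induction x rule: int_induct[where k = i])
    case base
    then show ?case using \<open>f i = g i\<close> .
  next
    case (step1 j)
    then show ?case
      using succ[of j] rng by (simp add: order_antisym)
  next
    case (step2 j)
    then show ?case
      using pred[of j] rng by (simp add: order_antisym)
  qed
qed

theorem mainTheorem8:
  fixes N :: int and f g :: "int \<Rightarrow> int" and i :: int
  assumes "N \<ge> 1"
    and "f \<in> NDPF1 N" and "g \<in> NDPF1 N"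
    and "fibers f = fibers g"
    and "range f = range g"
    and "f i = g i"
  shows "f = g"
proof -
  have "mono h" if "h \<in> NDPF1 N" for h
    using that unfolding NDPF1_def by (auto intro: monoI)
  then show ?thesis
    using mono_eq_if_fibers_range_eq assms(2-6) by blast
qed

end
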